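(* If $m=2$ and $k=3$, then the kernel of the Spencer operator $\mathcal S^2\colon\operatorname{Hom}(\wedge^2V,\mathfrak a)\to\operatorname{Hom}(\wedge^3V,V)$ is one-dimensional.
   Context: $\mathfrak a=\mathfrak{sl}(2,\mathbb R)\times\mathfrak{gl}(m,\mathbb R)$ acting faithfully on $V=V_k\otimes W$, where $V_k=S^k(\mathbb R^2)$ is the irreducible $(k+1)$-dimensional $\mathfrak{sl}(2,\mathbb R)$-module and $W=\mathbb R^m$ the standard $\mathfrak{gl}(m,\mathbb R)$-module. $\mathcal S^2(\phi)(v_1\wedge v_2\wedge v_3)=-\phi(v_2\wedge v_3)v_1+\phi(v_1\wedge v_3)v_2-\phi(v_1\wedge v_2)v_3$. *)

theory Defs
  imports "HOL-Analysis.Analysis" "HOL-Library.Numeral_Type"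
begin

text \<open>Index set of the basis of V = V_3 (x) W, with V_3 = S^3(R^2) (basis indexed by type 4,
  monomials u_i = e1^(3-i) e2^i) and W = R^2 (basis indexed by type 2).\<close>
type_synonym idx = "4 \<times> 2"

text \<open>Matrix (row j, column i) of the action induced by a 2x2 matrix X (acting on R^2 by
  X e1 = X11 e1 + X21 e2, X e2 = X12 e1 + X22 e2) on S^k(R^2) as a derivation, in the basis
  u_i = e1^(k-i) e2^i, i = 0..k.\<close>
definition symk_entry :: "nat \<Rightarrow> real^2^2 \<Rightarrow> nat \<Rightarrow> nat \<Rightarrow> real" where
  "symk_entry k X j i =
     (if j = i then real (k - i) * X$1$1 + real i * X$2$2
      else if j = i + 1 then real (k - i) * X$2$1
      else if i = j + 1 then real i * X$1$2
      else 0)"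

definition pos4 :: "4 \<Rightarrow> nat" where
  "pos4 i = nat (Rep_bit0 i)"

definition sl2 :: "(real^2^2) set" where
  "sl2 = {X. trace X = 0}"

text \<open>The representation of sl(2,R) x gl(2,R) on V = V_3 (x) R^2:
  (X,Y) acts by rho_3(X) (x) id + id (x) Y.\<close>
definition rho :: "real^2^2 \<Rightarrow> real^2^2 \<Rightarrow> real^idx^idx" where
  "rho X Y = (\<chi> u v. symk_entry 3 X (pos4 (fst u)) (pos4 (fst v)) * (if snd u = snd v then 1 else 0)
                     + (if fst u = fst v then 1 else 0) * Y $ snd u $ snd v)"

text \<open>The (faithful) image of the Lie algebra a = sl(2,R) x gl(2,R) in gl(V).\<close>
definition alg_a :: "(real^idx^idx) set" where
  "alg_a = {rho X Y | X Y. X \<in> sl2}"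

text \<open>A bilinear map phi : V x V -> gl(V), stored by its values on pairs of basis vectors:
  phi$p$q = phi(e_p, e_q).\<close>
type_synonym bil = "real^idx^idx^idx^idx"

definition bil_app :: "bil \<Rightarrow> real^idx \<Rightarrow> real^idx \<Rightarrow> real^idx^idx" where
  "bil_app \<phi> v w = (\<Sum>p\<in>UNIV. \<Sum>q\<in>UNIV. (v$p * w$q) *\<^sub>R (\<phi>$p$q))"

definition Hom2_a :: "bil set" where
  "Hom2_a = {\<phi>. (\<forall>v. bil_app \<phi> v v = 0) \<and> (\<forall>v w. bil_app \<phi> v w \<in> alg_a)}"

definition spencer2 :: "bil \<Rightarrow> real^idx \<Rightarrow> real^idx \<Rightarrow> real^idx \<Rightarrow> real^idx" where
  "spencer2 \<phi> v1 v2 v3 =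
     - (bil_app \<phi> v2 v3 *v v1) + (bil_app \<phi> v1 v3 *v v2) - (bil_app \<phi> v1 v2 *v v3)"

definition spencer2_kernel :: "bil set" where
  "spencer2_kernel = {\<phi> \<in> Hom2_a. \<forall>v1 v2 v3. spencer2 \<phi> v1 v2 v3 = 0}"

end

theory Submission
  imports Defs
begin

text \<open>
  Number the basis vectors \<open>u\<^sub>a \<otimes> w\<^sub>b\<close> of \<open>V\<close> by \<open>2a + b\<close> and give \<open>a\<close> seven coordinates,
  three for \<open>sl(2)\<close> and four for \<open>gl(2)\<close>. An alternating map \<open>\<phi>\<close> is then described by the
  \<open>28 \<cdot> 7\<close> coordinates of its values \<open>\<phi>(e\<^sub>p, e\<^sub>q)\<close>, \<open>p < q\<close>, and the vanishing of
  \<open>S\<^sup>2 \<phi>\<close> on basis vectors is a homogeneous linear system in them. The system respects the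
  weights of the diagonal torus of \<open>a\<close>, so it splits into 33 weight blocks. Every block but
  the one of weight \<open>(0, -1, -1)\<close> forces its unknowns to vanish, and that one has a
  one-dimensional solution space, realised by an explicit element \<open>\<phi>\<^sub>0\<close> of the kernel.
\<close>

lemma four_eq_zero_mod4 [simp]: "(4::4) = 0" and two_eq_zero_mod2 [simp]: "(2::2) = 0"
  by simp_all

lemma pos4_simps [simp]: "pos4 0 = 0" "pos4 1 = 1" "pos4 2 = 2" "pos4 3 = 3"
  unfolding pos4_def by (simp_all add: bit0.Rep_numeral bit0.Rep_0 bit0.Rep_1)

lemma less_8_cases: "(n::nat) < 8 \<Longrightarrow> n = 0 \<or> n = 1 \<or> n = 2 \<or> n = 3 \<or> n = 4 \<or> n = 5 \<or> n = 6 \<or> n = 7"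
  by arith

lemma less_7_cases: "(n::nat) < 7 \<Longrightarrow> n = 0 \<or> n = 1 \<or> n = 2 \<or> n = 3 \<or> n = 4 \<or> n = 5 \<or> n = 6"
  by arith

definition idx_of_nat :: "nat \<Rightarrow> idx" where
  "idx_of_nat n = (of_nat (n div 2), of_nat (n mod 2))"

definition nat_of_idx :: "idx \<Rightarrow> nat" where
  "nat_of_idx u = 2 * pos4 (fst u) + (if snd u = 0 then 0 else 1)"

lemma nat_of_idx_less: "nat_of_idx u < 8"
proof -
  obtain a b where "u = (a, b)" by fastforce
  then show ?thesis
    unfolding nat_of_idx_def using exhaust_4[of a] exhaust_2[of b] by auto
qed

lemma idx_of_nat_of_idx [simp]: "idx_of_nat (nat_of_idx u) = u"
proof -
  obtain a b where "u = (a, b)" by fastforce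
  then show ?thesis
    unfolding nat_of_idx_def idx_of_nat_def using exhaust_4[of a] exhaust_2[of b] by auto
qed

lemma nat_of_idx_of_nat: "n < 8 \<Longrightarrow> nat_of_idx (idx_of_nat n) = n"
  by (drule less_8_cases) (auto simp: nat_of_idx_def idx_of_nat_def)

definition sl2_entry :: "(nat \<Rightarrow> real) \<Rightarrow> nat \<Rightarrow> nat \<Rightarrow> real" where
  "sl2_entry x a b =
     (if a = b then (3 - 2 * real b) * x 0
      else if a = b + 1 then (3 - real b) * x 2
      else if b = a + 1 then real b * x 1 else 0)"

definition a_entry :: "(nat \<Rightarrow> real) \<Rightarrow> nat \<Rightarrow> nat \<Rightarrow> real" where
  "a_entry x r s =
     (if r mod 2 = s mod 2 then sl2_entry x (r div 2) (s div 2) else 0)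
     + (if r div 2 = s div 2 then x (3 + 2 * (r mod 2) + s mod 2) else 0)"

text \<open>Since \<open>2 = 0\<close> in type \<open>2\<close>, \<open>X$1$0\<close> and \<open>X$0$1\<close> are the entries \<open>X\<^sub>1\<^sub>2\<close> and \<open>X\<^sub>2\<^sub>1\<close>
  of \<open>symk_entry\<close>; the entry \<open>X$0$0 = -X$1$1\<close> is not a coordinate.\<close>
definition a_coords :: "real^2^2 \<Rightarrow> real^2^2 \<Rightarrow> nat \<Rightarrow> real" where
  "a_coords X Y k = [X$1$1, X$1$0, X$0$1, Y$0$0, Y$0$1, Y$1$0, Y$1$1] ! k"

definition sl2_of_coords :: "(nat \<Rightarrow> real) \<Rightarrow> real^2^2" where
  "sl2_of_coords x =
     (\<chi> i j. if i = j then (if i = 1 then x 0 else - x 0) else if i = 1 then x 1 else x 2)"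

definition gl2_of_coords :: "(nat \<Rightarrow> real) \<Rightarrow> real^2^2" where
  "gl2_of_coords x = (\<chi> i j. x (3 + 2 * (if i = 0 then 0 else 1) + (if j = 0 then 0 else 1)))"

lemma trace_2x2: "trace (X::real^2^2) = X$0$0 + X$1$1"
  unfolding trace_def by (simp add: UNIV_2)

lemma trace_sl2_of_coords: "trace (sl2_of_coords x) = 0"
  by (simp add: trace_2x2 sl2_of_coords_def)

lemma a_coords_of_coords: "k < 7 \<Longrightarrow> a_coords (sl2_of_coords x) (gl2_of_coords x) k = x k"
  by (drule less_7_cases) (auto simp: a_coords_def sl2_of_coords_def gl2_of_coords_def)

lemma a_entry_scale: "(\<And>k. k < 7 \<Longrightarrow> x k = c * y k) \<Longrightarrow> a_entry x r s = c * a_entry y r s"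
proof -
  assume xy: "\<And>k. k < 7 \<Longrightarrow> x k = c * y k"
  have "3 + 2 * (r mod 2) + s mod 2 < 7" by arith
  then show ?thesis
    unfolding a_entry_def sl2_entry_def by (simp add: xy algebra_simps)
qed

lemma rho_entry:
  assumes "trace X = 0" "r < 8" "s < 8"
  shows "rho X Y $ idx_of_nat r $ idx_of_nat s = a_entry (a_coords X Y) r s"
proof -
  have "X$0$0 = - X$1$1" using assms(1) by (simp add: trace_2x2)
  then show ?thesis
    using less_8_cases[OF assms(2)] less_8_cases[OF assms(3)]
    by (elim disjE) (simp_all add: rho_def idx_of_nat_def a_entry_def sl2_entry_def
        symk_entry_def a_coords_def)
qed

lemma alg_a_entries:
  "M \<in> alg_a \<Longrightarrow> \<exists>x. \<forall>r<8. \<forall>s<8. M $ idx_of_nat r $ idx_of_nat s = a_entry x r s"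
  unfolding alg_a_def sl2_def using rho_entry by blast

lemma a_entry_in_alg_a: "(\<chi> u v. a_entry x (nat_of_idx u) (nat_of_idx v)) \<in> alg_a"
proof -
  have "(\<chi> u v. a_entry x (nat_of_idx u) (nat_of_idx v)) = rho (sl2_of_coords x) (gl2_of_coords x)"
  proof (simp only: vec_eq_iff, intro allI)
    fix u v
    have "rho (sl2_of_coords x) (gl2_of_coords x) $ u $ v
        = a_entry (a_coords (sl2_of_coords x) (gl2_of_coords x)) (nat_of_idx u) (nat_of_idx v)"
      using rho_entry[OF trace_sl2_of_coords nat_of_idx_less nat_of_idx_less] by simp
    also have "\<dots> = a_entry x (nat_of_idx u) (nat_of_idx v)"
      by (rule a_entry_scale[where c = 1, simplified]) (rule a_coords_of_coords)
    finally show "(\<chi> u v. a_entry x (nat_of_idx u) (nat_of_idx v)) $ u $ v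
        = rho (sl2_of_coords x) (gl2_of_coords x) $ u $ v" by simp
  qed
  then show ?thesis
    unfolding alg_a_def sl2_def using trace_sl2_of_coords by blast
qed

lemma rho_add: "rho X Y + rho X' Y' = rho (X + X') (Y + Y')"
  by (simp add: vec_eq_iff rho_def symk_entry_def algebra_simps)

lemma rho_scaleR: "c *\<^sub>R rho X Y = rho (c *\<^sub>R X) (c *\<^sub>R Y)"
  by (simp add: vec_eq_iff rho_def symk_entry_def algebra_simps)

lemma subspace_alg_a: "subspace alg_a"
proof (unfold subspace_def, intro conjI ballI allI)
  have "(0::real^idx^idx) = rho 0 0" by (simp add: vec_eq_iff rho_def symk_entry_def)
  then show "0 \<in> alg_a" unfolding alg_a_def sl2_def by (force simp: trace_2x2)
next
  fix M N assume "M \<in> alg_a" "N \<in> alg_a"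
  then show "M + N \<in> alg_a"
    unfolding alg_a_def sl2_def by (force simp: rho_add trace_2x2)
next
  fix c M assume "M \<in> alg_a"
  then obtain X Y where "M = rho X Y" "trace X = 0"
    unfolding alg_a_def sl2_def by blast
  then have "c *\<^sub>R M = rho (c *\<^sub>R X) (c *\<^sub>R Y)" "trace (c *\<^sub>R X) = 0"
    by (simp_all add: rho_scaleR trace_2x2 flip: distrib_left)
  then show "c *\<^sub>R M \<in> alg_a"
    unfolding alg_a_def sl2_def by blast
qed

lemma bil_app_axis [simp]: "bil_app \<phi> (axis p 1) (axis q 1) = \<phi>$p$q"
proof -
  have "(axis p 1 $ p' * axis q 1 $ q') *\<^sub>R \<phi>$p'$q'
      = (if p' = p then if q' = q then \<phi>$p$q else 0 else 0)" for p' q'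
    by (simp add: axis_def)
  moreover have "(\<Sum>q'\<in>UNIV. if p' = p then if q' = q then \<phi>$p$q else 0 else 0)
      = (if p' = p then \<phi>$p$q else 0)" for p'
    by simp
  ultimately show ?thesis
    unfolding bil_app_def by simp
qed

lemma bil_app_add_left: "bil_app \<phi> (v + w) z = bil_app \<phi> v z + bil_app \<phi> w z"
  unfolding bil_app_def by (simp add: distrib_right scaleR_add_left sum.distrib)

lemma bil_app_add_right: "bil_app \<phi> z (v + w) = bil_app \<phi> z v + bil_app \<phi> z w"
  unfolding bil_app_def by (simp add: distrib_left scaleR_add_left sum.distrib)

lemma bil_app_alternating:
  assumes "\<And>p q. \<phi>$p$q = - \<phi>$q$p"
  shows "bil_app \<phi> v v = 0"
proof -
  have "bil_app \<phi> v v = (\<Sum>q\<in>UNIV. \<Sum>p\<in>UNIV. (v$p * v$q) *\<^sub>R \<phi>$p$q)"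
    unfolding bil_app_def by (rule sum.swap)
  also have "\<dots> = (\<Sum>q\<in>UNIV. \<Sum>p\<in>UNIV. - ((v$q * v$p) *\<^sub>R \<phi>$q$p))"
  proof (intro sum.cong refl)
    fix p q
    show "(v$p * v$q) *\<^sub>R \<phi>$p$q = - ((v$q * v$p) *\<^sub>R \<phi>$q$p)"
      by (subst assms) (simp add: mult.commute)
  qed
  also have "\<dots> = - bil_app \<phi> v v"
    unfolding bil_app_def by (simp add: sum_negf)
  finally show ?thesis
    by (metis scaleR_2 scaleR_eq_0_iff eq_neg_iff_add_eq_0 zero_neq_numeral)
qed

lemma bil_app_in_alg_a: "(\<And>p q. \<phi>$p$q \<in> alg_a) \<Longrightarrow> bil_app \<phi> v w \<in> alg_a"
  unfolding bil_app_def
  by (intro subspace_sum[OF subspace_alg_a] subspace_scale[OF subspace_alg_a])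

lemma Hom2_a_diag: "\<phi> \<in> Hom2_a \<Longrightarrow> \<phi>$p$p = 0"
proof -
  assume "\<phi> \<in> Hom2_a"
  then have "bil_app \<phi> (axis p 1) (axis p 1) = 0" unfolding Hom2_a_def by blast
  then show ?thesis by simp
qed

lemma Hom2_a_antisym:
  assumes "\<phi> \<in> Hom2_a"
  shows "\<phi>$p$q = - \<phi>$q$p"
proof -
  have "bil_app \<phi> (axis p 1 + axis q 1) (axis p 1 + axis q 1) = 0"
    using assms unfolding Hom2_a_def by blast
  then show ?thesis
    by (simp add: bil_app_add_left bil_app_add_right Hom2_a_diag[OF assms] eq_neg_iff_add_eq_0
        add.commute)
qed

lemma Hom2_a_entry: "\<phi> \<in> Hom2_a \<Longrightarrow> \<phi>$p$q \<in> alg_a"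
proof -
  assume "\<phi> \<in> Hom2_a"
  then have "bil_app \<phi> (axis p 1) (axis q 1) \<in> alg_a" unfolding Hom2_a_def by blast
  then show ?thesis by simp
qed

lemma Hom2_aI: "(\<And>p q. \<phi>$p$q = - \<phi>$q$p) \<Longrightarrow> (\<And>p q. \<phi>$p$q \<in> alg_a) \<Longrightarrow> \<phi> \<in> Hom2_a"
  unfolding Hom2_a_def using bil_app_alternating bil_app_in_alg_a by blast

lemma bil_app_mult_vec_component:
  "(bil_app \<phi> a b *v c) $ r = (\<Sum>s\<in>UNIV. \<Sum>p\<in>UNIV. \<Sum>q\<in>UNIV. a$p * b$q * \<phi>$p$q$r$s * c$s)"
proof -
  have "bil_app \<phi> a b $ r $ s = (\<Sum>p\<in>UNIV. \<Sum>q\<in>UNIV. a$p * b$q * \<phi>$p$q$r$s)" for s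
    unfolding bil_app_def by (simp add: sum_component)
  then show ?thesis
    by (simp add: matrix_vector_mult_def sum_distrib_right)
qed

lemma sum_rotate3:
  "(\<Sum>s\<in>S. \<Sum>p\<in>P. \<Sum>q\<in>Q. f s p q) = (\<Sum>p\<in>P. \<Sum>q\<in>Q. \<Sum>s\<in>S. f s p q)"
  by (subst sum.swap) (simp only: sum.swap[of _ S Q])

lemma spencer2_component:
  "spencer2 \<phi> v1 v2 v3 $ r = (\<Sum>i\<in>UNIV. \<Sum>j\<in>UNIV. \<Sum>k\<in>UNIV.
     v1$i * v2$j * v3$k * (- \<phi>$j$k$r$i + \<phi>$i$k$r$j - \<phi>$i$j$r$k))"
proof -
  have t1: "(bil_app \<phi> v2 v3 *v v1) $ r
      = (\<Sum>i\<in>UNIV. \<Sum>j\<in>UNIV. \<Sum>k\<in>UNIV. v2$j * v3$k * \<phi>$j$k$r$i * v1$i)"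
    by (rule bil_app_mult_vec_component)
  have t2: "(bil_app \<phi> v1 v3 *v v2) $ r
      = (\<Sum>i\<in>UNIV. \<Sum>j\<in>UNIV. \<Sum>k\<in>UNIV. v1$i * v3$k * \<phi>$i$k$r$j * v2$j)"
    unfolding bil_app_mult_vec_component by (rule sum.swap)
  have t3: "(bil_app \<phi> v1 v2 *v v3) $ r
      = (\<Sum>i\<in>UNIV. \<Sum>j\<in>UNIV. \<Sum>k\<in>UNIV. v1$i * v2$j * \<phi>$i$j$r$k * v3$k)"
    unfolding bil_app_mult_vec_component by (rule sum_rotate3)
  have "spencer2 \<phi> v1 v2 v3 $ r = (\<Sum>i\<in>UNIV. \<Sum>j\<in>UNIV. \<Sum>k\<in>UNIV.
      - (v2$j * v3$k * \<phi>$j$k$r$i * v1$i) + v1$i * v3$k * \<phi>$i$k$r$j * v2$j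
      - v1$i * v2$j * \<phi>$i$j$r$k * v3$k)"
    unfolding spencer2_def vector_minus_component vector_add_component vector_uminus_component
      t1 t2 t3
    by (simp only: sum_negf sum.distrib sum_subtractf)
  also have "\<dots> = (\<Sum>i\<in>UNIV. \<Sum>j\<in>UNIV. \<Sum>k\<in>UNIV.
      v1$i * v2$j * v3$k * (- \<phi>$j$k$r$i + \<phi>$i$k$r$j - \<phi>$i$j$r$k))"
    by (intro sum.cong refl) (simp add: algebra_simps)
  finally show ?thesis .
qed

lemma spencer2_axis:
  "spencer2 \<phi> (axis i 1) (axis j 1) (axis k 1) $ r = - \<phi>$j$k$r$i + \<phi>$i$k$r$j - \<phi>$i$j$r$k"
  by (simp add: spencer2_def matrix_vector_mult_basis column_def)

lemma alternating_eq_0_if_sorted: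
  fixes f :: "'a::linorder \<Rightarrow> 'a \<Rightarrow> 'a \<Rightarrow> 'b::linordered_ab_group_add"
  assumes swap12: "\<And>i j k. f j i k = - f i j k"
    and swap23: "\<And>i j k. f i k j = - f i j k"
    and sorted: "\<And>i j k. i < j \<Longrightarrow> j < k \<Longrightarrow> i \<in> A \<Longrightarrow> j \<in> A \<Longrightarrow> k \<in> A \<Longrightarrow> f i j k = 0"
    and "i \<in> A" "j \<in> A" "k \<in> A"
  shows "f i j k = 0"
proof -
  have swap13: "f k j i = - f i j k" for i j k
    by (metis swap12 swap23 minus_minus)
  consider "i = j" | "j = k" | "i = k" | "i < j" "j < k" | "i < k" "k < j" | "j < i" "i < k"
    | "j < k" "k < i" | "k < i" "i < j" | "k < j" "j < i"
    by fastforce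
  then show ?thesis
  proof cases
    case 1 then show ?thesis using swap12[of i i k] by simp
  next
    case 2 then show ?thesis using swap23[of i j j] by simp
  next
    case 3 then show ?thesis using swap13[of i j i] by simp
  qed (use assms swap13 in \<open>metis neg_equal_0_iff_equal\<close>)+
qed

definition wedge_coords :: "(nat \<Rightarrow> nat \<Rightarrow> nat \<Rightarrow> real) \<Rightarrow> nat \<Rightarrow> nat \<Rightarrow> nat \<Rightarrow> real" where
  "wedge_coords P p q = (if p < q then P p q else if q < p then (\<lambda>k. - P q p k) else (\<lambda>k. 0))"

definition wedge_entry :: "(nat \<Rightarrow> nat \<Rightarrow> nat \<Rightarrow> real) \<Rightarrow> nat \<Rightarrow> nat \<Rightarrow> nat \<Rightarrow> nat \<Rightarrow> real" where
  "wedge_entry P p q r s = a_entry (wedge_coords P p q) r s"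

definition spencer_coord :: "(nat \<Rightarrow> nat \<Rightarrow> nat \<Rightarrow> real) \<Rightarrow> nat \<Rightarrow> nat \<Rightarrow> nat \<Rightarrow> nat \<Rightarrow> real" where
  "spencer_coord P i j k r = - wedge_entry P j k r i + wedge_entry P i k r j - wedge_entry P i j r k"

lemmas spencer_coord_simps =
  spencer_coord_def wedge_entry_def wedge_coords_def a_entry_def sl2_entry_def

lemma a_entry_zero [simp]: "a_entry (\<lambda>k. 0) r s = 0"
  by (simp add: a_entry_def sl2_entry_def)

lemma a_entry_uminus: "a_entry (\<lambda>k. - x k) r s = - a_entry x r s"
  by (simp add: a_entry_def sl2_entry_def)

lemma wedge_entry_swap: "wedge_entry P q p r s = - wedge_entry P p q r s"
  by (simp add: wedge_entry_def wedge_coords_def a_entry_uminus)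

lemma spencer_coord_swap12: "spencer_coord P j i k r = - spencer_coord P i j k r"
  unfolding spencer_coord_def using wedge_entry_swap[of P i j] by simp

lemma spencer_coord_swap23: "spencer_coord P i k j r = - spencer_coord P i j k r"
  unfolding spencer_coord_def using wedge_entry_swap[of P j k] by simp

lemma Hom2_a_coords:
  assumes "\<phi> \<in> Hom2_a"
  obtains P where "\<And>p q r s. r < 8 \<Longrightarrow> s < 8 \<Longrightarrow>
    \<phi> $ idx_of_nat p $ idx_of_nat q $ idx_of_nat r $ idx_of_nat s = wedge_entry P p q r s"
proof -
  have "\<forall>p q. \<exists>x. \<forall>r<8. \<forall>s<8.
      \<phi> $ idx_of_nat p $ idx_of_nat q $ idx_of_nat r $ idx_of_nat s = a_entry x r s"
    using alg_a_entries[OF Hom2_a_entry[OF assms]] by blast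
  then obtain P where P: "\<And>p q r s. r < 8 \<Longrightarrow> s < 8 \<Longrightarrow>
      \<phi> $ idx_of_nat p $ idx_of_nat q $ idx_of_nat r $ idx_of_nat s = a_entry (P p q) r s"
    by metis
  have "\<phi> $ idx_of_nat p $ idx_of_nat q $ idx_of_nat r $ idx_of_nat s = wedge_entry P p q r s"
    if "r < 8" "s < 8" for p q r s
  proof (cases p q rule: linorder_cases)
    case less
    then show ?thesis using P[OF that] by (simp add: wedge_entry_def wedge_coords_def)
  next
    case equal
    then show ?thesis
      using Hom2_a_diag[OF assms]
      by (simp add: wedge_entry_def wedge_coords_def)
  next
    case greater
    then show ?thesis
      using P[OF that, of q p] Hom2_a_antisym[OF assms, of "idx_of_nat p" "idx_of_nat q"]
      by (simp add: wedge_entry_def wedge_coords_def a_entry_uminus)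
  qed
  then show ?thesis by (rule that)
qed

lemma spencer2_kernel_coords:
  assumes "\<phi> \<in> spencer2_kernel"
  obtains P where
    "\<And>p q r s. r < 8 \<Longrightarrow> s < 8 \<Longrightarrow>
      \<phi> $ idx_of_nat p $ idx_of_nat q $ idx_of_nat r $ idx_of_nat s = wedge_entry P p q r s"
    "\<And>i j k r. i < 8 \<Longrightarrow> j < 8 \<Longrightarrow> k < 8 \<Longrightarrow> r < 8 \<Longrightarrow> spencer_coord P i j k r = 0"
proof -
  have \<phi>: "\<phi> \<in> Hom2_a" "\<And>v1 v2 v3. spencer2 \<phi> v1 v2 v3 = 0"
    using assms unfolding spencer2_kernel_def by auto
  obtain P where P: "\<And>p q r s. r < 8 \<Longrightarrow> s < 8 \<Longrightarrow>
      \<phi> $ idx_of_nat p $ idx_of_nat q $ idx_of_nat r $ idx_of_nat s = wedge_entry P p q r s"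
    using Hom2_a_coords[OF \<phi>(1)] by blast
  moreover have "spencer_coord P i j k r = 0"
    if "i < 8" "j < 8" "k < 8" "r < 8" for i j k r
    using spencer2_axis[of \<phi> "idx_of_nat i" "idx_of_nat j" "idx_of_nat k" "idx_of_nat r"] \<phi>(2)
    by (simp add: spencer_coord_def P that)
  ultimately show ?thesis by (rule that)
qed

text \<open>The solution of the block of weight \<open>(0, -1, -1)\<close> normalised by \<open>P 4 5 2 = 1\<close>.\<close>
definition phi0_coords :: "nat \<Rightarrow> nat \<Rightarrow> nat \<Rightarrow> real" where
  "phi0_coords p q k =
    (case map_of
      [((0, 5, 1), 3/2), ((0, 6, 4), 9/2), ((0, 7, 0), - 9/4), ((0, 7, 3), - 9/4),
       ((0, 7, 6), 9/4), ((1, 4, 1), - 3/2), ((1, 6, 0), 9/4), ((1, 6, 3), - 9/4),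
       ((1, 6, 6), 9/4), ((1, 7, 5), - 9/2), ((2, 3, 1), - 1), ((2, 4, 4), - 3/2),
       ((2, 5, 0), 1/4), ((2, 5, 3), 3/4), ((2, 5, 6), - 3/4), ((2, 7, 2), - 3/2),
       ((3, 4, 0), - 1/4), ((3, 4, 3), 3/4), ((3, 4, 6), - 3/4), ((3, 5, 5), 3/2),
       ((3, 6, 2), 3/2), ((4, 5, 2), 1)] (p, q, k) of
     Some c \<Rightarrow> c | None \<Rightarrow> 0)"

named_theorems spencer_block

text \<open>The unknown \<open>P p q k\<close> has weight \<open>w(k) - w(e\<^sub>p) - w(e\<^sub>q)\<close> for the diagonal torus of
  \<open>a\<close>, and every Spencer equation involves unknowns of a single weight. The lemma
  \<open>spencer_block_h_a_b\<close> treats the weight with eigenvalue \<open>h\<close> of \<open>diag(1, -1) \<in> sl(2)\<close> and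
  character \<open>(a, b)\<close> of the diagonal of \<open>gl(2)\<close> (\<open>m\<close> for minus). The equations listed are
  independent, ordered so that \<open>simp\<close> eliminates the unknowns one at a time.\<close>

context
  fixes P :: "nat \<Rightarrow> nat \<Rightarrow> nat \<Rightarrow> real"
  assumes spencer: "\<And>i j k r. i < 8 \<Longrightarrow> j < 8 \<Longrightarrow> k < 8 \<Longrightarrow> r < 8 \<Longrightarrow> spencer_coord P i j k r = 0"
begin

lemma spencer_block_m8_m1_m1 [spencer_block]:
  "\<forall>(p, q, k)\<in>{(0, 1, 2)}. P p q k = 0"
  using spencer[of 0 1 2 4]
  by (simp add: spencer_coord_simps)

lemma spencer_block_m6_m2_0 [spencer_block]:
  "\<forall>(p, q, k)\<in>{(0, 1, 5), (0, 2, 2)}. P p q k = 0"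
  using spencer[of 0 1 2 3] spencer[of 0 1 4 5]
  by (simp add: spencer_coord_simps)

lemma spencer_block_m6_m1_m1 [spencer_block]:
  "\<forall>(p, q, k)\<in>{(0, 1, 0), (0, 1, 3), (0, 1, 6), (0, 3, 2), (1, 2, 2)}. P p q k = 0"
  using spencer[of 0 1 2 2] spencer[of 0 1 3 3] spencer[of 0 1 4 4] spencer[of 0 1 5 5]
    spencer[of 0 1 6 6]
  by (simp add: spencer_coord_simps)

lemma spencer_block_m6_0_m2 [spencer_block]:
  "\<forall>(p, q, k)\<in>{(0, 1, 4), (1, 3, 2)}. P p q k = 0"
  using spencer[of 0 1 3 2] spencer[of 0 1 5 4]
  by (simp add: spencer_coord_simps)

lemma spencer_block_m4_m3_1 [spencer_block]:
  "\<forall>(p, q, k)\<in>{(0, 2, 5)}. P p q k = 0"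
  using spencer[of 0 2 4 5]
  by (simp add: spencer_coord_simps)

lemma spencer_block_m4_m2_0 [spencer_block]:
  "\<forall>(p, q, k)\<in>{(0, 2, 0), (0, 2, 3), (0, 2, 6), (0, 3, 5), (0, 4, 2), (1, 2, 5)}. P p q k = 0"
  using spencer[of 0 1 2 1] spencer[of 0 1 4 3] spencer[of 0 2 3 3] spencer[of 0 2 4 4]
    spencer[of 0 2 5 5] spencer[of 0 2 6 6]
  by (simp add: spencer_coord_simps)

lemma spencer_block_m4_m1_m1 [spencer_block]:
  "\<forall>(p, q, k)\<in>{(0, 1, 1), (0, 2, 4), (0, 3, 0), (0, 3, 3), (0, 3, 6), (0, 5, 2), (1, 2, 0), (1, 2, 3),
    (1, 2, 6), (1, 3, 5), (1, 4, 2), (2, 3, 2)}. P p q k = 0"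
  using spencer[of 0 1 2 0] spencer[of 0 1 3 1] spencer[of 0 1 4 2] spencer[of 0 1 5 3]
    spencer[of 0 1 6 4] spencer[of 0 2 3 2] spencer[of 0 2 5 4] spencer[of 0 3 4 4] spencer[of 0
    3 5 5] spencer[of 0 3 6 6] spencer[of 1 2 3 3] spencer[of 1 2 4 4]
  by (simp add: spencer_coord_simps)

lemma spencer_block_m4_0_m2 [spencer_block]:
  "\<forall>(p, q, k)\<in>{(0, 3, 4), (1, 2, 4), (1, 3, 0), (1, 3, 3), (1, 3, 6), (1, 5, 2)}. P p q k = 0"
  using spencer[of 0 1 3 0] spencer[of 0 1 5 2] spencer[of 0 3 5 4] spencer[of 1 2 3 2]
    spencer[of 1 2 5 4] spencer[of 1 3 5 5]
  by (simp add: spencer_coord_simps)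

lemma spencer_block_m4_1_m3 [spencer_block]:
  "\<forall>(p, q, k)\<in>{(1, 3, 4)}. P p q k = 0"
  using spencer[of 1 3 5 4]
  by (simp add: spencer_coord_simps)

lemma spencer_block_m2_m3_1 [spencer_block]:
  "\<forall>(p, q, k)\<in>{(0, 4, 5)}. P p q k = 0"
  using spencer[of 0 2 4 3]
  by (simp add: spencer_coord_simps)

lemma spencer_block_m2_m2_0 [spencer_block]:
  "\<forall>(p, q, k)\<in>{(0, 2, 1), (0, 4, 0), (0, 4, 3), (0, 4, 6), (0, 5, 5), (0, 6, 2), (1, 4, 5), (2, 3, 5),
    (2, 4, 2)}. P p q k = 0"
  using spencer[of 0 1 4 1] spencer[of 0 1 6 3] spencer[of 0 2 3 1] spencer[of 0 2 4 2]
    spencer[of 0 2 5 3] spencer[of 0 2 6 4] spencer[of 0 3 4 3] spencer[of 0 4 5 5] spencer[of 0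
    4 6 6]
  by (simp add: spencer_coord_simps)

lemma spencer_block_m2_m1_m1 [spencer_block]:
  "\<forall>(p, q, k)\<in>{(0, 3, 1), (0, 4, 4), (0, 5, 0), (0, 5, 3), (0, 5, 6), (0, 7, 2), (1, 2, 1), (1, 4, 0),
    (1, 4, 3), (1, 4, 6), (1, 5, 5), (1, 6, 2), (2, 3, 0), (2, 3, 3), (2, 3, 6), (2, 5, 2),
    (3, 4, 2)}. P p q k = 0"
  using spencer[of 0 1 4 0] spencer[of 0 1 5 1] spencer[of 0 1 6 2] spencer[of 0 1 7 3]
    spencer[of 0 2 3 0] spencer[of 0 2 5 2] spencer[of 0 3 4 2] spencer[of 0 3 5 3] spencer[of 0
    3 6 4] spencer[of 0 4 5 4] spencer[of 0 4 7 6] spencer[of 0 5 6 6] spencer[of 1 2 3 1]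
    spencer[of 1 2 4 2] spencer[of 1 2 5 3] spencer[of 1 3 4 3] spencer[of 2 3 4 4]
  by (simp add: spencer_coord_simps)

lemma spencer_block_m2_0_m2 [spencer_block]:
  "\<forall>(p, q, k)\<in>{(0, 5, 4), (1, 3, 1), (1, 4, 4), (1, 5, 0), (1, 5, 3), (1, 5, 6), (1, 7, 2), (2, 3, 4),
    (3, 5, 2)}. P p q k = 0"
  using spencer[of 0 1 5 0] spencer[of 0 1 7 2] spencer[of 0 3 5 2] spencer[of 0 5 7 6]
    spencer[of 1 2 3 0] spencer[of 1 2 5 2] spencer[of 1 3 4 2] spencer[of 1 3 5 3] spencer[of 1
    3 6 4]
  by (simp add: spencer_coord_simps)

lemma spencer_block_m2_1_m3 [spencer_block]:
  "\<forall>(p, q, k)\<in>{(1, 5, 4)}. P p q k = 0"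
  using spencer[of 1 3 5 2]
  by (simp add: spencer_coord_simps)

lemma spencer_block_0_m3_1 [spencer_block]:
  "\<forall>(p, q, k)\<in>{(0, 6, 5), (2, 4, 5)}. P p q k = 0"
  using spencer[of 0 2 4 1] spencer[of 0 2 6 3]
  by (simp add: spencer_coord_simps)

lemma spencer_block_0_m2_0 [spencer_block]:
  "\<forall>(p, q, k)\<in>{(0, 4, 1), (0, 6, 0), (0, 6, 3), (0, 6, 6), (0, 7, 5), (1, 6, 5), (2, 4, 0), (2, 4, 3),
    (2, 4, 6), (2, 5, 5), (2, 6, 2), (3, 4, 5)}. P p q k = 0"
  using spencer[of 0 1 6 1] spencer[of 0 2 4 0] spencer[of 0 2 5 1] spencer[of 0 2 6 2]
    spencer[of 0 2 7 3] spencer[of 0 3 4 1] spencer[of 0 3 6 3] spencer[of 0 4 5 3] spencer[of 0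
    4 6 4] spencer[of 0 5 6 5] spencer[of 1 2 4 1] spencer[of 2 3 4 3]
  by (simp add: spencer_coord_simps)

lemma spencer_block_0_m1_m1 [spencer_block]:
  "\<forall>(p, q, k)\<in>{(0, 5, 1), (0, 6, 4), (0, 7, 0), (0, 7, 3), (0, 7, 6), (1, 4, 1), (1, 6, 0), (1, 6, 3),
    (1, 6, 6), (1, 7, 5), (2, 3, 1), (2, 4, 4), (2, 5, 0), (2, 5, 3), (2, 5, 6), (2, 7, 2),
    (3, 4, 0), (3, 4, 3), (3, 4, 6), (3, 5, 5), (3, 6, 2)}. P p q k = P 4 5 2 * phi0_coords
    p q k"
  using spencer[of 0 1 6 0] spencer[of 0 1 7 1] spencer[of 0 2 5 0] spencer[of 0 2 7 2]
    spencer[of 0 3 4 0] spencer[of 0 3 5 1] spencer[of 0 3 6 2] spencer[of 0 3 7 3] spencer[of 0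
    4 5 2] spencer[of 0 4 7 4] spencer[of 0 5 6 4] spencer[of 0 5 7 5] spencer[of 1 2 4 0]
    spencer[of 1 2 5 1] spencer[of 1 2 6 2] spencer[of 1 3 4 1] spencer[of 1 3 6 3] spencer[of 1
    4 5 3] spencer[of 2 3 4 2] spencer[of 2 3 5 3] spencer[of 2 3 6 4]
  by (simp add: spencer_coord_simps phi0_coords_def)

lemma spencer_block_0_0_m2 [spencer_block]:
  "\<forall>(p, q, k)\<in>{(0, 7, 4), (1, 5, 1), (1, 6, 4), (1, 7, 0), (1, 7, 3), (1, 7, 6), (2, 5, 4), (3, 4, 4),
    (3, 5, 0), (3, 5, 3), (3, 5, 6), (3, 7, 2)}. P p q k = 0"
  using spencer[of 0 1 7 0] spencer[of 0 3 5 0] spencer[of 0 3 7 2] spencer[of 0 5 7 4]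
    spencer[of 1 2 5 0] spencer[of 1 2 7 2] spencer[of 1 3 4 0] spencer[of 1 3 5 1] spencer[of 1
    3 6 2] spencer[of 1 3 7 3] spencer[of 1 4 5 2] spencer[of 2 3 5 2]
  by (simp add: spencer_coord_simps)

lemma spencer_block_0_1_m3 [spencer_block]:
  "\<forall>(p, q, k)\<in>{(1, 7, 4), (3, 5, 4)}. P p q k = 0"
  using spencer[of 1 3 5 0] spencer[of 1 3 7 2]
  by (simp add: spencer_coord_simps)

lemma spencer_block_2_m3_1 [spencer_block]:
  "\<forall>(p, q, k)\<in>{(2, 6, 5)}. P p q k = 0"
  using spencer[of 0 2 6 1]
  by (simp add: spencer_coord_simps)

lemma spencer_block_2_m2_0 [spencer_block]:
  "\<forall>(p, q, k)\<in>{(0, 6, 1), (2, 4, 1), (2, 6, 0), (2, 6, 3), (2, 6, 6), (2, 7, 5), (3, 6, 5), (4, 5, 5),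
    (4, 6, 2)}. P p q k = 0"
  using spencer[of 0 2 6 0] spencer[of 0 2 7 1] spencer[of 0 3 6 1] spencer[of 0 4 5 1]
    spencer[of 0 4 6 2] spencer[of 0 5 6 3] spencer[of 1 2 6 1] spencer[of 2 3 4 1] spencer[of 2
    3 6 3]
  by (simp add: spencer_coord_simps)

lemma spencer_block_2_m1_m1 [spencer_block]:
  "\<forall>(p, q, k)\<in>{(0, 7, 1), (1, 6, 1), (2, 5, 1), (2, 6, 4), (2, 7, 0), (2, 7, 3), (2, 7, 6), (3, 4, 1),
    (3, 6, 0), (3, 6, 3), (3, 6, 6), (3, 7, 5), (4, 5, 0), (4, 5, 3), (4, 5, 6), (4, 7, 2),
    (5, 6, 2)}. P p q k = 0"
  using spencer[of 0 2 7 0] spencer[of 0 3 6 0] spencer[of 0 3 7 1] spencer[of 0 4 5 0]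
    spencer[of 0 4 7 2] spencer[of 0 5 6 2] spencer[of 0 5 7 3] spencer[of 1 2 6 0] spencer[of 1
    2 7 1] spencer[of 1 3 6 1] spencer[of 1 4 5 1] spencer[of 1 4 6 2] spencer[of 2 3 4 0]
    spencer[of 2 3 5 1] spencer[of 2 3 6 2] spencer[of 2 3 7 3] spencer[of 2 4 5 2]
  by (simp add: spencer_coord_simps)

lemma spencer_block_2_0_m2 [spencer_block]:
  "\<forall>(p, q, k)\<in>{(1, 7, 1), (2, 7, 4), (3, 5, 1), (3, 6, 4), (3, 7, 0), (3, 7, 3), (3, 7, 6), (4, 5, 4),
    (5, 7, 2)}. P p q k = 0"
  using spencer[of 0 3 7 0] spencer[of 0 5 7 2] spencer[of 1 2 7 0] spencer[of 1 3 6 0]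
    spencer[of 1 3 7 1] spencer[of 1 4 5 0] spencer[of 1 4 7 2] spencer[of 2 3 5 0] spencer[of 2
    3 7 2]
  by (simp add: spencer_coord_simps)

lemma spencer_block_2_1_m3 [spencer_block]:
  "\<forall>(p, q, k)\<in>{(3, 7, 4)}. P p q k = 0"
  using spencer[of 1 3 7 0]
  by (simp add: spencer_coord_simps)

lemma spencer_block_4_m3_1 [spencer_block]:
  "\<forall>(p, q, k)\<in>{(4, 6, 5)}. P p q k = 0"
  using spencer[of 0 4 6 1]
  by (simp add: spencer_coord_simps)

lemma spencer_block_4_m2_0 [spencer_block]:
  "\<forall>(p, q, k)\<in>{(2, 6, 1), (4, 6, 0), (4, 6, 3), (4, 6, 6), (4, 7, 5), (5, 6, 5)}. P p q k = 0"
  using spencer[of 0 4 6 0] spencer[of 0 4 7 1] spencer[of 0 5 6 1] spencer[of 1 4 6 1]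
    spencer[of 2 3 6 1] spencer[of 2 4 6 2]
  by (simp add: spencer_coord_simps)

lemma spencer_block_4_m1_m1 [spencer_block]:
  "\<forall>(p, q, k)\<in>{(2, 7, 1), (3, 6, 1), (4, 5, 1), (4, 6, 4), (4, 7, 0), (4, 7, 3), (4, 7, 6), (5, 6, 0),
    (5, 6, 3), (5, 6, 6), (5, 7, 5), (6, 7, 2)}. P p q k = 0"
  using spencer[of 0 4 7 0] spencer[of 0 5 6 0] spencer[of 0 5 7 1] spencer[of 0 6 7 2]
    spencer[of 1 4 6 0] spencer[of 1 4 7 1] spencer[of 1 5 6 1] spencer[of 2 3 6 0] spencer[of 2
    3 7 1] spencer[of 2 4 5 0] spencer[of 2 4 7 2] spencer[of 2 5 6 2]
  by (simp add: spencer_coord_simps)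

lemma spencer_block_4_0_m2 [spencer_block]:
  "\<forall>(p, q, k)\<in>{(3, 7, 1), (4, 7, 4), (5, 6, 4), (5, 7, 0), (5, 7, 3), (5, 7, 6)}. P p q k = 0"
  using spencer[of 0 5 7 0] spencer[of 1 4 7 0] spencer[of 1 5 6 0] spencer[of 1 5 7 1]
    spencer[of 2 3 7 0] spencer[of 2 5 7 2]
  by (simp add: spencer_coord_simps)

lemma spencer_block_4_1_m3 [spencer_block]:
  "\<forall>(p, q, k)\<in>{(5, 7, 4)}. P p q k = 0"
  using spencer[of 1 5 7 0]
  by (simp add: spencer_coord_simps)

lemma spencer_block_6_m2_0 [spencer_block]:
  "\<forall>(p, q, k)\<in>{(4, 6, 1), (6, 7, 5)}. P p q k = 0"
  using spencer[of 0 6 7 1] spencer[of 2 4 6 0]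
  by (simp add: spencer_coord_simps)

lemma spencer_block_6_m1_m1 [spencer_block]:
  "\<forall>(p, q, k)\<in>{(4, 7, 1), (5, 6, 1), (6, 7, 0), (6, 7, 3), (6, 7, 6)}. P p q k = 0"
  using spencer[of 0 6 7 0] spencer[of 1 6 7 1] spencer[of 2 4 7 0] spencer[of 2 5 6 0]
    spencer[of 2 6 7 2]
  by (simp add: spencer_coord_simps)

lemma spencer_block_6_0_m2 [spencer_block]:
  "\<forall>(p, q, k)\<in>{(5, 7, 1), (6, 7, 4)}. P p q k = 0"
  using spencer[of 1 6 7 0] spencer[of 2 5 7 0]
  by (simp add: spencer_coord_simps)

lemma spencer_block_8_m1_m1 [spencer_block]:
  "\<forall>(p, q, k)\<in>{(6, 7, 1)}. P p q k = 0"
  using spencer[of 2 6 7 0]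
  by (simp add: spencer_coord_simps)

lemma spencer_coord_solution:
  assumes "p < q" "q < 8" "k < 7"
  shows "P p q k = P 4 5 2 * phi0_coords p q k"
proof -
  have "p < 8" using assms by simp
  note blocks = spencer_block[simplified]
  show ?thesis
    using less_8_cases[OF \<open>p < 8\<close>] less_8_cases[OF assms(2)] less_7_cases[OF assms(3)] assms(1)
    by (elim disjE) (simp_all add: phi0_coords_def blocks)
qed

end

definition phi0 :: bil where
  "phi0 = (\<chi> u v w z.
     wedge_entry phi0_coords (nat_of_idx u) (nat_of_idx v) (nat_of_idx w) (nat_of_idx z))"

lemma phi0_spencer_coord:
  assumes "i < 8" "j < 8" "k < 8" "r < 8"
  shows "spencer_coord phi0_coords i j k r = 0"
proof -
  have "list_all (\<lambda>i. list_all (\<lambda>j. list_all (\<lambda>k. list_all (\<lambda>r.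
      spencer_coord phi0_coords i j k r = 0) [0..<8]) [Suc j..<8]) [Suc i..<8]) [0..<8]"
    by code_simp
  then have sorted: "spencer_coord phi0_coords i j k r = 0"
    if "i < j" "j < k" "i \<in> {..<8}" "j \<in> {..<8}" "k \<in> {..<8}" for i j k
    using that \<open>r < 8\<close> by (simp add: list_all_iff)
  show ?thesis
  proof (rule alternating_eq_0_if_sorted[where f = "\<lambda>i j k. spencer_coord phi0_coords i j k r"
        and A = "{..<8}"])
    show "\<And>i j k. spencer_coord phi0_coords j i k r = - spencer_coord phi0_coords i j k r"
      by (rule spencer_coord_swap12)
    show "\<And>i j k. spencer_coord phi0_coords i k j r = - spencer_coord phi0_coords i j k r"
      by (rule spencer_coord_swap23)
  qed (use assms sorted in auto)
qed

lemma phi0_in_kernel: "phi0 \<in> spencer2_kernel"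
proof -
  have "phi0 \<in> Hom2_a"
  proof (rule Hom2_aI)
    fix u v
    show "phi0 $ u $ v = - phi0 $ v $ u"
      unfolding phi0_def vec_eq_iff
      by (simp add: wedge_entry_swap[of _ "nat_of_idx u" "nat_of_idx v"])
    show "phi0 $ u $ v \<in> alg_a"
      using a_entry_in_alg_a by (simp add: phi0_def wedge_entry_def)
  qed
  moreover have "- phi0$j$k$r$i + phi0$i$k$r$j - phi0$i$j$r$k = 0" for i j k r
    using phi0_spencer_coord[OF nat_of_idx_less nat_of_idx_less nat_of_idx_less nat_of_idx_less]
    by (simp add: phi0_def spencer_coord_def)
  then have "spencer2 phi0 v1 v2 v3 = 0" for v1 v2 v3
    unfolding vec_eq_iff spencer2_component by simp
  ultimately show ?thesis
    unfolding spencer2_kernel_def by blast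
qed

lemma phi0_nonzero: "phi0 \<noteq> 0"
proof
  assume "phi0 = 0"
  moreover have "phi0 $ idx_of_nat 4 $ idx_of_nat 5 $ idx_of_nat 2 $ idx_of_nat 0 = 3"
    by (simp add: phi0_def nat_of_idx_of_nat spencer_coord_simps phi0_coords_def)
  ultimately show False by simp
qed

lemma spencer2_kernel_subset_span: "spencer2_kernel \<subseteq> span {phi0}"
proof
  fix \<phi> assume "\<phi> \<in> spencer2_kernel"
  then obtain P where
    coords: "\<And>p q r s. r < 8 \<Longrightarrow> s < 8 \<Longrightarrow>
      \<phi> $ idx_of_nat p $ idx_of_nat q $ idx_of_nat r $ idx_of_nat s = wedge_entry P p q r s" and
    spencer: "\<And>i j k r. i < 8 \<Longrightarrow> j < 8 \<Longrightarrow> k < 8 \<Longrightarrow> r < 8 \<Longrightarrow> spencer_coord P i j k r = 0"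
    using spencer2_kernel_coords by blast
  define c where "c = P 4 5 2"
  have "wedge_coords P p q k = c * wedge_coords phi0_coords p q k" if "p < 8" "q < 8" "k < 7"
    for p q k
    using spencer_coord_solution[OF spencer, of p q k] spencer_coord_solution[OF spencer, of q p k]
      that
    by (auto simp: wedge_coords_def c_def)
  then have "wedge_entry P p q r s = c * wedge_entry phi0_coords p q r s" if "p < 8" "q < 8"
    for p q r s
    unfolding wedge_entry_def using that by (intro a_entry_scale) simp
  then have "\<phi> $ u $ v $ w $ z = c * phi0 $ u $ v $ w $ z" for u v w z
    using coords[OF nat_of_idx_less nat_of_idx_less, of "nat_of_idx u" "nat_of_idx v"]
    by (simp add: phi0_def nat_of_idx_less)
  then have "\<phi> = c *\<^sub>R phi0"
    by (simp add: vec_eq_iff)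
  then show "\<phi> \<in> span {phi0}"
    by (simp add: span_base span_scale)
qed

theorem lemma5:
  shows "dim spencer2_kernel = 1"
proof -
  have "span spencer2_kernel = span {phi0}"
  proof
    show "span spencer2_kernel \<subseteq> span {phi0}"
      using spencer2_kernel_subset_span by (simp add: span_minimal)
    show "span {phi0} \<subseteq> span spencer2_kernel"
      using phi0_in_kernel by (simp add: span_mono)
  qed
  then have "dim spencer2_kernel = dim {phi0}"
    by (metis dim_span)
  then show ?thesis
    using phi0_nonzero by simp
qed

end
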